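(* Let $i$ be a nonempty word in the letters $\{0,1\}$ whose last letter is $1$, and let $0<x<1$, $0<y<1$. Then \begin{align*} L_{[x^{-1}\,|\,i]}(y) &= \sum_{[a|b]=[i]} (-1)^{w(a)-l(a)} \sum_{\epsilon\in\{0,1\}^{l(a)}} L_{[a(\epsilon)\,|\,y^{-1}]}(x)\, L_{[b]}(y)\\ &\qquad - \sum_{\substack{[a|b]=[i]\\ b \text{ nonempty},\ b_1=1}} (-1)^{w(a)-l(a)} \sum_{\epsilon\in\{0,1\}^{l(a)}} L_{[a(\epsilon)\,|\,1]}(x)\, L_{[b]}(y). \end{align*} In particular (letting $y\to 1^-$), \[ L_{[x^{-1}\,|\,i]}(1) = \sum_{\substack{[a|b]=[i]\\ b \text{ empty or } b_1=0}} (-1)^{w(a)-l(a)} \sum_{\epsilon\in\{0,1\}^{l(a)}} L_{[a(\epsilon)\,|\,1]}(x)\, L_{[b]}(1). \]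
   Context: Hyperlogarithms: for a word $w=[\sigma_1|\sigma_2|\dots|\sigma_n]$ in letters $\sigma_j\in\mathbb{C}$ with last letter $\sigma_n\neq 0$, define $L_{[\,]}(z)=1$ and recursively $L_{[\sigma_1|\sigma_2|\dots|\sigma_n]}(z)=\int_0^z \omega_{\sigma_1}(t)\,L_{[\sigma_2|\dots|\sigma_n]}(t)$, where $\omega_0=dt/t$ and $\omega_\sigma=dt/(\sigma-t)$ for $\sigma\neq 0$ (so the letter $1$ corresponds to $dt/(1-t)$, and a letter $x^{-1}$ to $dt/(x^{-1}-t)$). For a word $a$ in $\{0,1\}$, $w(a)$ (weight) is its number of letters and $l(a)$ (length) is its number of letters equal to $1$; $a_k$ denotes its $k$-th letter. The notation $[a|b]=[i]$ means $i$ is the concatenation of the (possibly empty) words $a$ and $b$, and $[a|\sigma]$ denotes the word $a$ followed by the letter $\sigma$. For a word $a$ in $\{0,1\}$ whose letters equal to $1$ are at positions $p_1<\dots<p_{l(a)}$ and $\epsilon=(\epsilon_1,\dots,\epsilon_{l(a)})\in\{0,1\}^{l(a)}$, $a(\epsilon)$ is the word obtained from $a$ by replacing the letter at position $p_j$ by $\epsilon_j$ for each $j$ (all other letters stay $0$). *)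

theory Defs
  imports "HOL-Analysis.Analysis"
begin

definition omega :: "real \<Rightarrow> real \<Rightarrow> real" where
  "omega s t = (if s = 0 then 1 / t else 1 / (s - t))"

text \<open>Hyperlogarithm L_w(z), iterated integral along the segment [0,z] of the real line
  (letters and argument real; this covers all instances used).\<close>
fun hlog :: "real list \<Rightarrow> real \<Rightarrow> real" where
  "hlog [] z = 1"
| "hlog (s # w) z = integral {0..z} (\<lambda>t. omega s t * hlog w t)"

text \<open>Length l(a): number of letters equal to 1.\<close>
definition ones :: "real list \<Rightarrow> nat" where
  "ones a = length (filter (\<lambda>c. c = 1) a)"

fun subst_ones :: "real list \<Rightarrow> real list \<Rightarrow> real list" where
  "subst_ones [] e = []"
| "subst_ones (c # a) e =
     (if c = 1 then hd e # subst_ones a (tl e) else c # subst_ones a e)"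

definition eps_set :: "nat \<Rightarrow> real list set" where
  "eps_set n = {e. length e = n \<and> set e \<subseteq> {0, 1}}"

definition inner_sum :: "real list \<Rightarrow> real \<Rightarrow> real \<Rightarrow> real" where
  "inner_sum a s x = (-1) ^ (length a - ones a) *
      (\<Sum>e\<in>eps_set (ones a). hlog (subst_ones a e @ [s]) x)"

end

theory Submission
  imports Defs
begin

text \<open>For fixed \<open>y\<close>, both sides are functions of \<open>x \<in> (0, 1)\<close> tending to \<open>0\<close> as
  \<open>x \<rightarrow> 0+\<close>. Writing \<open>L[x^-1|c|i'](y) = \<integral>\<^sub>0\<^sup>y x/(1 - xt) L[c|i'](t) dt\<close>, differentiating in
  \<open>x\<close>, integrating by parts and splitting \<open>t/(1 - xt) \<omega>\<^sub>c(t)\<close> into partial fractions gives a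
  linear differential equation whose inhomogeneity contains \<open>L[x^-1|i'](y)\<close>. On the right-hand
  side \<open>d/dx\<close> only acts on the first letter of \<open>a(\<epsilon>)\<close>, and the same equation results; induction
  on \<open>i\<close> proves the identity for \<open>y < 1\<close>.

  As \<open>y \<rightarrow> 1-\<close>, the two terms belonging to a cut \<open>[a|b]\<close> with \<open>b\<^sub>1 = 1\<close> combine to the
  difference of the signed sums over \<open>\<epsilon>\<close> with last letters \<open>y^-1\<close> and \<open>1\<close>, times
  \<open>L[b](y)\<close>. The difference is \<open>O(1 - y)\<close> because hyperlogarithms are Lipschitz in their last
  letter, and \<open>L[b](y) = O((1 - y)^-1/2)\<close>; so these terms vanish, while all remaining
  hyperlogarithms are continuous at \<open>y = 1\<close>.\<close>

section \<open>Regularity of hyperlogarithms on [0, 1)\<close>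

definition admissible :: "real list \<Rightarrow> bool" where
  "admissible w \<longleftrightarrow> (\<forall>c\<in>set w. c = 0 \<or> 1 \<le> c) \<and> (w \<noteq> [] \<longrightarrow> last w \<noteq> 0)"

lemma admissible_ConsD:
  assumes "admissible (c # w)"
  shows "admissible w" "c = 0 \<or> 1 \<le> c" "w = [] \<Longrightarrow> 1 \<le> c"
  using assms unfolding admissible_def by auto

lemma admissible_snoc: "\<forall>c\<in>set v. c = 0 \<or> 1 \<le> c \<Longrightarrow> 1 \<le> s \<Longrightarrow> admissible (v @ [s])"
  unfolding admissible_def by auto

lemma admissible_drop: "admissible w \<Longrightarrow> admissible (drop k w)"
  unfolding admissible_def by (auto dest: in_set_dropD simp: last_drop)

lemma omega_inverse: "x \<noteq> 0 \<Longrightarrow> omega (inverse x) t = x / (1 - x * t)"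
  unfolding omega_def by (cases "x * t = 1") (auto simp: field_simps)

lemma continuous_on_omega: "c = 0 \<or> 1 \<le> c \<Longrightarrow> continuous_on {0<..<1} (omega c)"
  unfolding omega_def by (auto intro!: continuous_intros)

lemma abs_omega_le: "1 \<le> c \<Longrightarrow> 0 \<le> u \<Longrightarrow> u < 1 \<Longrightarrow> \<bar>omega c u\<bar> \<le> 1 / (1 - u)"
  unfolding omega_def by (auto simp: divide_simps)

lemma abs_omega_mult_le:
  assumes "c = 0 \<or> 1 \<le> c" "0 \<le> u" "u < 1"
  shows "\<bar>omega c u\<bar> * u \<le> 1 / (1 - u)"
proof -
  have "u * (1 - u) \<le> c - u" if "1 \<le> c"
    using mult_left_le_one_le[of "1 - u" u] assms that by linarith
  then show ?thesis using assms unfolding omega_def by (auto simp: divide_simps)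
qed

lemma abs_omega_mult_le_const:
  assumes "c = 0 \<or> 1 < c" "0 \<le> u" "u < 1"
  shows "\<bar>omega c u\<bar> * u \<le> (if c = 0 then 1 else 1 / (c - 1))"
proof -
  have "u * (c - 1) \<le> c - u" if "1 < c"
    using mult_left_le_one_le[of "c - 1" u] assms that by linarith
  then show ?thesis using assms unfolding omega_def by (auto simp: divide_simps)
qed

lemma continuous_on_atLeastLessThan:
  fixes f :: "real \<Rightarrow> 'a::topological_space"
  assumes "\<And>b. a \<le> b \<Longrightarrow> b < c \<Longrightarrow> continuous_on {a..b} f"
  shows "continuous_on {a..<c} f"
  unfolding continuous_on_def
proof
  fix x assume x: "x \<in> {a..<c}"
  define b where "b = (x + c) / 2"
  have b: "a \<le> b" "b < c" "x < b" using x by (auto simp: b_def)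
  have "at x within {a..<c} = at x within {a..b}"
    by (rule at_within_nhd[of x "{..<b}"]) (use b in auto)
  then show "(f \<longlongrightarrow> f x) (at x within {a..<c})"
    using assms[OF b(1,2)] x b unfolding continuous_on_def by auto
qed

lemma abs_integral_le:
  fixes f :: "real \<Rightarrow> real"
  assumes "f integrable_on {a..b}" "a \<le> b" "\<And>u. u \<in> {a..b} \<Longrightarrow> \<bar>f u\<bar> \<le> M"
  shows "\<bar>integral {a..b} f\<bar> \<le> (b - a) * M"
proof -
  have "norm (integral {a..b} f) \<le> integral {a..b} (\<lambda>u. M)"
    by (rule integral_norm_bound_integral) (use assms in auto)
  then show ?thesis using assms(2) by simp
qed

lemma integrable_on_if_dominated:
  fixes f g :: "real \<Rightarrow> real"
  assumes "continuous_on {a<..<b} f" "g integrable_on {a..b}" "\<And>u. u \<in> {a<..<b} \<Longrightarrow> \<bar>f u\<bar> \<le> g u"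
  shows "f integrable_on {a..b}"
proof -
  have "f integrable_on {a<..<b}"
    by (rule measurable_bounded_by_integrable_imp_integrable[where g = g])
       (use assms in \<open>auto simp: integrable_on_open_interval_real
          intro: continuous_imp_measurable_on_sets_lebesgue\<close>)
  then show ?thesis by (simp add: integrable_on_open_interval_real)
qed

lemma has_integral_three_halves:
  assumes "0 \<le> t" "t < 1"
  shows "((\<lambda>u. 1 / ((1 - u) * sqrt (1 - u))) has_integral 2 / sqrt (1 - t) - 2) {0..t}"
proof -
  have "((\<lambda>u. 1 / ((1 - u) * sqrt (1 - u))) has_integral
          (\<lambda>u. 2 / sqrt (1 - u)) t - (\<lambda>u. 2 / sqrt (1 - u)) 0) {0..t}"
  proof (rule fundamental_theorem_of_calculus)
    fix u assume "u \<in> {0..t}"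
    then have "((\<lambda>u. 2 / sqrt (1 - u)) has_real_derivative 1 / ((1 - u) * sqrt (1 - u))) (at u)"
      using assms by (auto intro!: derivative_eq_intros simp: divide_simps power2_eq_square)
    then show "((\<lambda>u. 2 / sqrt (1 - u)) has_vector_derivative 1 / ((1 - u) * sqrt (1 - u)))
        (at u within {0..t})"
      by (simp add: has_real_derivative_iff_has_vector_derivative has_vector_derivative_at_within)
  qed (use assms in simp)
  then show ?thesis by simp
qed

lemma integrable_inverse_sqrt: "(\<lambda>u. 1 / sqrt (1 - u)) integrable_on {0..1::real}"
proof -
  have "((\<lambda>u. 1 / sqrt (1 - u)) has_integral
          (\<lambda>u. - 2 * sqrt (1 - u)) 1 - (\<lambda>u. - 2 * sqrt (1 - u)) 0) {0..1::real}"
  proof (rule fundamental_theorem_of_calculus_interior)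
    fix u :: real assume "u \<in> {0<..<1}"
    then have "((\<lambda>u. - 2 * sqrt (1 - u)) has_real_derivative 1 / sqrt (1 - u)) (at u)"
      by (auto intro!: derivative_eq_intros simp: divide_simps)
    then show "((\<lambda>u. - 2 * sqrt (1 - u)) has_vector_derivative 1 / sqrt (1 - u)) (at u)"
      by (simp add: has_real_derivative_iff_has_vector_derivative)
  qed (auto intro!: continuous_intros)
  then show ?thesis by blast
qed

lemma integrable_if_three_halves_bound:
  fixes f :: "real \<Rightarrow> real"
  assumes "continuous_on {0<..<1} f"
    and "\<And>u. 0 \<le> u \<Longrightarrow> u < 1 \<Longrightarrow> \<bar>f u\<bar> \<le> M / ((1 - u) * sqrt (1 - u))"
    and "0 \<le> b" "b < 1"
  shows "f integrable_on {0..b}"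
proof (rule integrable_on_if_dominated)
  show "continuous_on {0<..<b} f"
    by (rule continuous_on_subset[OF assms(1)]) (use assms in auto)
  show "(\<lambda>u. M / ((1 - u) * sqrt (1 - u))) integrable_on {0..b}"
    using has_integral_mult_right[OF has_integral_three_halves[OF assms(3,4)], of M] by auto
qed (use assms in auto)

lemma abs_integral_le_if_three_halves_bound:
  fixes f :: "real \<Rightarrow> real"
  assumes f: "continuous_on {0<..<1} f"
    and bound: "\<And>u. 0 \<le> u \<Longrightarrow> u < 1 \<Longrightarrow> \<bar>f u\<bar> \<le> M / ((1 - u) * sqrt (1 - u))"
    and t: "0 \<le> t" "t < 1"
  shows "\<bar>integral {0..t} f\<bar> \<le> 2 * M * t / sqrt (1 - t)"
proof -
  have M: "0 \<le> M" using bound[of 0] by auto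
  have "norm (integral {0..t} f) \<le> integral {0..t} (\<lambda>u. M * (1 / ((1 - u) * sqrt (1 - u))))"
    using has_integral_mult_right[OF has_integral_three_halves[OF t], of M] bound t
    by (intro integral_norm_bound_integral integrable_if_three_halves_bound[OF f bound t]) auto
  also have "\<dots> = M * (2 / sqrt (1 - t) - 2)"
    using has_integral_mult_right[OF has_integral_three_halves[OF t], of M]
    by (simp add: integral_unique)
  also have "2 / sqrt (1 - t) - 2 \<le> 2 * t / sqrt (1 - t)"
  proof -
    have "1 - t \<le> sqrt (1 - t)"
      using mult_left_le_one_le[of "sqrt (1 - t)" "sqrt (1 - t)"] t by simp
    then show ?thesis using t by (simp add: divide_simps)
  qed
  then have "M * (2 / sqrt (1 - t) - 2) \<le> M * (2 * t / sqrt (1 - t))"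
    using M by (rule mult_left_mono)
  finally show ?thesis by (simp add: ac_simps)
qed

lemma hlog_Cons_eq: "hlog (c # w) = (\<lambda>t. integral {0..t} (\<lambda>u. omega c u * hlog w u))"
  by auto

lemma hlog_Nil_eq: "hlog [] = (\<lambda>_. 1)"
  by auto

lemma omega_mult_hlog_bound:
  assumes c: "c = 0 \<or> 1 \<le> c" "w = [] \<Longrightarrow> 1 \<le> c"
    and w: "w \<noteq> [] \<Longrightarrow> \<bar>hlog w u\<bar> \<le> K * u / sqrt (1 - u)" and K: "0 \<le> K"
    and u: "0 \<le> u" "u < 1"
  shows "\<bar>omega c u * hlog w u\<bar> \<le> max 1 K / ((1 - u) * sqrt (1 - u))"
proof (cases "w = []")
  case True
  have "\<bar>omega c u * hlog w u\<bar> \<le> 1 / (1 - u)"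
    using True abs_omega_le[OF c(2) u] by simp
  also have "\<dots> \<le> 1 / ((1 - u) * sqrt (1 - u))"
    using u by (auto simp: divide_simps real_sqrt_le_1_iff)
  also have "\<dots> \<le> max 1 K / ((1 - u) * sqrt (1 - u))"
    using u by (intro divide_right_mono) auto
  finally show ?thesis .
next
  case False
  have "\<bar>omega c u * hlog w u\<bar> \<le> \<bar>omega c u\<bar> * (K * u / sqrt (1 - u))"
    unfolding abs_mult by (intro mult_left_mono w False) simp
  also have "\<dots> = (\<bar>omega c u\<bar> * u) * (K / sqrt (1 - u))"
    by simp
  also have "\<dots> \<le> 1 / (1 - u) * (K / sqrt (1 - u))"
    using abs_omega_mult_le[OF c(1) u] K u by (intro mult_right_mono) auto
  also have "\<dots> \<le> max 1 K / ((1 - u) * sqrt (1 - u))"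
    using u by (simp add: divide_right_mono)
  finally show ?thesis .
qed

text \<open>The exponent \<open>1/2\<close> makes the growth bound stable under integration against \<open>\<omega>\<^sub>0\<close>
  and \<open>\<omega>\<^sub>c\<close>, \<open>c \<ge> 1\<close>, while keeping it integrable against \<open>\<omega>\<^sub>0\<close> up to \<open>1\<close>
  and \<open>o(1 / (1 - u))\<close>.\<close>
lemma hlog_regular:
  assumes "admissible w"
  shows "continuous_on {0..<1} (hlog w) \<and>
    (w \<noteq> [] \<longrightarrow> (\<exists>K\<ge>0. \<forall>u\<in>{0..<1}. \<bar>hlog w u\<bar> \<le> K * u / sqrt (1 - u)))"
  using assms
proof (induction w)
  case Nil
  then show ?case by (simp add: hlog_Nil_eq)
next
  case (Cons c w)
  note c = admissible_ConsD[OF Cons.prems]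
  obtain K where K: "0 \<le> K" "w \<noteq> [] \<Longrightarrow> \<forall>u\<in>{0..<1}. \<bar>hlog w u\<bar> \<le> K * u / sqrt (1 - u)"
    using Cons.IH[OF c(1)] by (cases "w = []") auto
  let ?f = "\<lambda>u. omega c u * hlog w u"
  have f_bound: "\<bar>?f u\<bar> \<le> max 1 K / ((1 - u) * sqrt (1 - u))" if "0 \<le> u" "u < 1" for u
    using omega_mult_hlog_bound[OF c(2,3) _ K(1) that] K(2) that by auto
  have "continuous_on {0<..<1} (hlog w)"
    using Cons.IH[OF c(1)] by (auto intro: continuous_on_subset)
  then have f_cont: "continuous_on {0<..<1} ?f"
    by (intro continuous_intros continuous_on_omega c(2))
  have "continuous_on {0..<1} (hlog (c # w))"
    unfolding hlog_Cons_eq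
    by (intro continuous_on_atLeastLessThan indefinite_integral_continuous_1
        integrable_if_three_halves_bound[OF f_cont f_bound]) auto
  moreover have "\<bar>hlog (c # w) t\<bar> \<le> 2 * max 1 K * t / sqrt (1 - t)" if "t \<in> {0..<1}" for t
    using abs_integral_le_if_three_halves_bound[OF f_cont f_bound] that by simp
  ultimately show ?case by (intro conjI impI exI[of _ "2 * max 1 K"]) auto
qed

lemma continuous_on_hlog: "admissible w \<Longrightarrow> continuous_on {0..<1} (hlog w)"
  using hlog_regular by blast

lemma hlog_growth:
  assumes "admissible w" "w \<noteq> []"
  obtains K where "0 \<le> K" "\<And>u. 0 \<le> u \<Longrightarrow> u < 1 \<Longrightarrow> \<bar>hlog w u\<bar> \<le> K * u / sqrt (1 - u)"
  using hlog_regular[OF assms(1)] assms(2) by auto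

lemma continuous_on_omega_mult_hlog:
  assumes "admissible (c # w)"
  shows "continuous_on {0<..<1} (\<lambda>u. omega c u * hlog w u)"
proof -
  have "continuous_on {0<..<1} (hlog w)"
    using continuous_on_hlog[OF admissible_ConsD(1)[OF assms]] by (rule continuous_on_subset) auto
  then show ?thesis
    by (intro continuous_intros continuous_on_omega admissible_ConsD(2)[OF assms])
qed

lemma integrable_omega_mult_hlog:
  assumes w: "admissible (c # w)" and b: "0 \<le> b" "b < 1"
  shows "(\<lambda>u. omega c u * hlog w u) integrable_on {0..b}"
proof -
  note c = admissible_ConsD[OF w]
  obtain K where K: "0 \<le> K" "w \<noteq> [] \<Longrightarrow> \<forall>u\<in>{0..<1}. \<bar>hlog w u\<bar> \<le> K * u / sqrt (1 - u)"
    using hlog_regular[OF c(1)] by (cases "w = []") auto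
  show ?thesis
    by (rule integrable_if_three_halves_bound[where M = "max 1 K",
          OF continuous_on_omega_mult_hlog[OF w] _ b])
       (use omega_mult_hlog_bound[OF c(2,3) _ K(1)] K(2) in auto)
qed

lemma hlog_has_derivative:
  assumes w: "admissible (c # w)" and t: "0 < t" "t < 1"
  shows "(hlog (c # w) has_real_derivative omega c t * hlog w t) (at t)"
proof -
  define b where "b = (t + 1) / 2"
  have b: "0 \<le> b" "b < 1" "t < b" using t by (auto simp: b_def)
  have "isCont (\<lambda>u. omega c u * hlog w u) t"
    using continuous_on_interior[OF continuous_on_omega_mult_hlog[OF w], of t] t by simp
  then have "((\<lambda>t. integral {0..t} (\<lambda>u. omega c u * hlog w u)) has_vector_derivative
      omega c t * hlog w t) (at t within ({0..b} - {}))"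
    by (intro integral_has_vector_derivative_continuous_at integrable_omega_mult_hlog[OF w b(1,2)])
       (use t b in \<open>auto intro: continuous_at_imp_continuous_within\<close>)
  then show ?thesis
    unfolding hlog_Cons_eq has_real_derivative_iff_has_vector_derivative
    using at_within_Icc_at[of 0 t b] t b by simp
qed

lemma hlog_tendsto_0:
  assumes "admissible w" "w \<noteq> []"
  shows "(hlog w \<longlongrightarrow> 0) (at_right 0)"
proof -
  have "(hlog w \<longlongrightarrow> hlog w 0) (at 0 within {0..<1})"
    using continuous_on_hlog[OF assms(1)] unfolding continuous_on_def by auto
  moreover have "at (0::real) within {0<..} = at 0 within {0..<1}"
    by (rule at_within_nhd[of 0 "{..<1}"]) auto
  moreover have "hlog w 0 = 0"
    using assms(2) by (cases w) auto
  ultimately show ?thesis by simp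
qed

text \<open>For a first letter \<open>0\<close> or \<open>> 1\<close> the integrand is \<open>O(1 / sqrt(1 - u))\<close>, hence
  integrable up to \<open>1\<close>.\<close>
lemma hlog_tendsto_at_left_1:
  assumes w: "admissible w" "w \<noteq> []" and c: "c = 0 \<or> 1 < c"
  shows "(hlog (c # w) \<longlongrightarrow> hlog (c # w) 1) (at_left 1)"
proof -
  have cw: "admissible (c # w)"
    using w c unfolding admissible_def by auto
  obtain K where K: "0 \<le> K" "\<And>u. 0 \<le> u \<Longrightarrow> u < 1 \<Longrightarrow> \<bar>hlog w u\<bar> \<le> K * u / sqrt (1 - u)"
    using hlog_growth[OF w] by blast
  define C where "C = (if c = 0 then 1 else 1 / (c - 1))"
  have C: "0 \<le> C" using c by (auto simp: C_def)
  have bound: "\<bar>omega c u * hlog w u\<bar> \<le> C * K * (1 / sqrt (1 - u))" if "u \<in> {0<..<1}" for u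
  proof -
    have u: "0 \<le> u" "u < 1" using that by auto
    have "\<bar>omega c u * hlog w u\<bar> \<le> \<bar>omega c u\<bar> * (K * u / sqrt (1 - u))"
      unfolding abs_mult by (intro mult_left_mono K(2) u) simp
    also have "\<dots> = (\<bar>omega c u\<bar> * u) * (K / sqrt (1 - u))"
      by simp
    also have "\<dots> \<le> C * (K / sqrt (1 - u))"
      using abs_omega_mult_le_const[OF c u] K(1) u unfolding C_def by (intro mult_right_mono) auto
    finally show ?thesis by simp
  qed
  have "(\<lambda>u. omega c u * hlog w u) integrable_on {0..1}"
    by (rule integrable_on_if_dominated[OF continuous_on_omega_mult_hlog[OF cw] _ bound])
       (use integrable_cmul[OF integrable_inverse_sqrt, of "C * K"] in simp)
  then have "continuous_on {0..1} (hlog (c # w))"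
    unfolding hlog_Cons_eq by (rule indefinite_integral_continuous_1)
  then have "(hlog (c # w) \<longlongrightarrow> hlog (c # w) 1) (at 1 within {0..1})"
    unfolding continuous_on_def by simp
  then show ?thesis
    using at_within_Icc_at_left[of "0::real" 1] by simp
qed

lemma abs_omega_diff_le:
  assumes s: "1 \<le> s" "1 \<le> s'" and u: "0 \<le> u" "u \<le> b" and b: "b < 1"
  shows "\<bar>omega s u - omega s' u\<bar> \<le> \<bar>s - s'\<bar> / (1 - b) ^ 2"
proof -
  have "omega s u - omega s' u = (s' - s) / ((s - u) * (s' - u))"
    using s u b by (simp add: omega_def field_simps)
  then have "\<bar>omega s u - omega s' u\<bar> = \<bar>s - s'\<bar> / ((s - u) * (s' - u))"
    using s u b by (simp add: abs_div abs_mult abs_minus_commute)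
  also have "\<dots> \<le> \<bar>s - s'\<bar> / (1 - b) ^ 2"
    unfolding power2_eq_square using s u b by (intro divide_left_mono mult_mono mult_pos_pos) auto
  finally show ?thesis .
qed

lemma hlog_snoc_lipschitz:
  assumes "\<forall>c\<in>set v. c = 0 \<or> 1 \<le> c" and s: "1 \<le> s" "1 \<le> s'" and t: "0 \<le> t" "t \<le> b" and b: "b < 1"
  shows "\<bar>hlog (v @ [s]) t - hlog (v @ [s']) t\<bar> \<le> t * \<bar>s - s'\<bar> / (1 - b) ^ (length v + 2)"
  using assms(1) t
proof (induction v arbitrary: t)
  case Nil
  have int: "(\<lambda>u. omega r u * hlog [] u) integrable_on {0..t}" if "1 \<le> r" for r
    using integrable_omega_mult_hlog[of r "[]" t] Nil.prems b that by (simp add: admissible_def)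
  have "\<bar>integral {0..t} (\<lambda>u. omega s u - omega s' u)\<bar> \<le> (t - 0) * (\<bar>s - s'\<bar> / (1 - b) ^ 2)"
  proof (rule abs_integral_le)
    show "(\<lambda>u. omega s u - omega s' u) integrable_on {0..t}"
      using integrable_diff[OF int[OF s(1)] int[OF s(2)]] by simp
  qed (use Nil.prems abs_omega_diff_le[OF s _ _ b] in auto)
  moreover have "hlog [s] t - hlog [s'] t = integral {0..t} (\<lambda>u. omega s u - omega s' u)"
    using int[OF s(1)] int[OF s(2)] by (simp add: integral_diff)
  ultimately show ?case by (simp add: power2_eq_square)
next
  case (Cons c v)
  let ?d = "\<lambda>u. hlog (v @ [s]) u - hlog (v @ [s']) u"
  let ?K = "\<bar>s - s'\<bar> / (1 - b) ^ (length v + 2)"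
  have c: "c = 0 \<or> 1 \<le> c" and v: "\<forall>c\<in>set v. c = 0 \<or> 1 \<le> c" using Cons.prems by auto
  have int: "(\<lambda>u. omega c u * hlog (v @ [r]) u) integrable_on {0..t}" if "1 \<le> r" for r
    using integrable_omega_mult_hlog[of c "v @ [r]" t] admissible_snoc[of "c # v" r] Cons.prems b that
    by auto
  have "\<bar>integral {0..t} (\<lambda>u. omega c u * ?d u)\<bar> \<le> (t - 0) * (?K / (1 - b))"
  proof (rule abs_integral_le)
    show "(\<lambda>u. omega c u * ?d u) integrable_on {0..t}"
      using integrable_diff[OF int[OF s(1)] int[OF s(2)]] by (simp add: right_diff_distrib)
    fix u assume "u \<in> {0..t}"
    then have u: "0 \<le> u" "u \<le> b" using Cons.prems by auto
    have "\<bar>?d u\<bar> \<le> u * ?K"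
      using Cons.IH[OF v u] by simp
    then have "\<bar>omega c u * ?d u\<bar> \<le> \<bar>omega c u\<bar> * (u * ?K)"
      unfolding abs_mult by (rule mult_left_mono) simp
    also have "\<dots> = (\<bar>omega c u\<bar> * u) * ?K"
      by simp
    also have "\<dots> \<le> 1 / (1 - b) * ?K"
    proof (intro mult_right_mono)
      have "\<bar>omega c u\<bar> * u \<le> 1 / (1 - u)" using abs_omega_mult_le[OF c u(1)] u b by simp
      also have "\<dots> \<le> 1 / (1 - b)" using u b by (simp add: divide_simps)
      finally show "\<bar>omega c u\<bar> * u \<le> 1 / (1 - b)" .
    qed (use b in simp)
    finally show "\<bar>omega c u * ?d u\<bar> \<le> ?K / (1 - b)" by (simp add: ac_simps)
  qed (use Cons.prems in auto)
  moreover have "hlog ((c # v) @ [s]) t - hlog ((c # v) @ [s']) t = integral {0..t} (\<lambda>u. omega c u * ?d u)"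
    using int[OF s(1)] int[OF s(2)] by (simp add: integral_diff right_diff_distrib)
  ultimately show ?case by (simp add: field_simps)
qed

section \<open>The signed sums over \<open>\<epsilon>\<close>\<close>

lemma finite_eps_set: "finite (eps_set n)"
proof -
  have "eps_set n = {e. set e \<subseteq> {0, 1} \<and> length e = n}"
    unfolding eps_set_def by auto
  then show ?thesis
    using finite_lists_length_eq[of "{0, 1::real}" n] by simp
qed

lemma eps_set_0: "eps_set 0 = {[]}"
  unfolding eps_set_def by auto

lemma eps_set_Suc: "eps_set (Suc n) = Cons 0 ` eps_set n \<union> Cons 1 ` eps_set n"
proof
  show "eps_set (Suc n) \<subseteq> Cons 0 ` eps_set n \<union> Cons 1 ` eps_set n"
  proof
    fix e assume "e \<in> eps_set (Suc n)"
    then obtain b e' where "e = b # e'" "b \<in> {0, 1}" "e' \<in> eps_set n"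
      unfolding eps_set_def by (cases e) auto
    then show "e \<in> Cons 0 ` eps_set n \<union> Cons 1 ` eps_set n" by auto
  qed
qed (auto simp: eps_set_def)

lemma sum_eps_set_Suc: "(\<Sum>e\<in>eps_set (Suc n). h e) = (\<Sum>e\<in>eps_set n. h (0 # e) + h (1 # e))"
proof -
  have "(\<Sum>e\<in>eps_set (Suc n). h e) = (\<Sum>e\<in>Cons 0 ` eps_set n. h e) + (\<Sum>e\<in>Cons 1 ` eps_set n. h e)"
    unfolding eps_set_Suc by (rule sum.union_disjoint) (auto simp: finite_eps_set)
  also have "\<dots> = (\<Sum>e\<in>eps_set n. h (0 # e) + h (1 # e))"
    by (simp add: sum.reindex sum.distrib)
  finally show ?thesis .
qed

lemma ones_Cons: "ones (c # a) = (if c = 1 then Suc (ones a) else ones a)"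
  by (simp add: ones_def)

lemma ones_le_length: "ones a \<le> length a"
  by (simp add: ones_def)

lemma length_subst_ones: "length (subst_ones a e) = length a"
  by (induction a arbitrary: e) auto

lemma subst_ones_letters: "set a \<subseteq> {0, 1} \<Longrightarrow> e \<in> eps_set (ones a) \<Longrightarrow> set (subst_ones a e) \<subseteq> {0, 1}"
proof (induction a arbitrary: e)
  case (Cons c a)
  show ?case
  proof (cases "c = 1")
    case True
    with Cons.prems obtain b e' where "e = b # e'" "b \<in> {0, 1}" "e' \<in> eps_set (ones a)"
      unfolding eps_set_def ones_Cons by (cases e) auto
    then show ?thesis using Cons True by auto
  qed (use Cons in \<open>auto simp: ones_Cons\<close>)
qed simp

lemma admissible_subst_ones_snoc:
  assumes "set v \<subseteq> {0, 1}" "e \<in> eps_set (ones a)" "set a \<subseteq> {0, 1}" "1 \<le> s"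
  shows "admissible (v @ subst_ones a e @ [s])"
  using admissible_snoc[of "v @ subst_ones a e" s] subst_ones_letters[OF assms(3,2)] assms(1,4)
  by auto

text \<open>The logarithmic derivative picked up by the signed sum when \<open>c \<in> {0, 1}\<close> is prepended to
  \<open>a\<close>: for \<open>c = 0\<close> the sign \<open>(-1)^(w(a) - l(a))\<close> flips, for \<open>c = 1\<close> the new entry of
  \<open>\<epsilon>\<close> runs over both letters.\<close>
definition weight :: "real \<Rightarrow> real \<Rightarrow> real" where
  "weight c x = (if c = 0 then - omega 0 x else omega 0 x + omega 1 x)"

lemma inner_sum_Nil: "inner_sum [] s x = hlog [s] x"
  by (simp add: inner_sum_def eps_set_0 ones_def del: hlog.simps)

lemma inner_sum_Nil_has_derivative:
  assumes "1 \<le> s" "0 < x" "x < 1"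
  shows "((\<lambda>x. inner_sum [] s x) has_real_derivative 1 / (s - x)) (at x)"
  using hlog_has_derivative[of s "[]" x] assms
  by (simp add: inner_sum_Nil admissible_def omega_def del: hlog.simps(2))

lemma inner_sum_Cons_has_derivative:
  assumes a: "set a \<subseteq> {0, 1}" and c: "c = 0 \<or> c = 1" and s: "1 \<le> s" and x: "0 < x" "x < 1"
  shows "((\<lambda>x. inner_sum (c # a) s x) has_real_derivative weight c x * inner_sum a s x) (at x)"
proof -
  let ?E = "eps_set (ones a)"
  let ?w = "\<lambda>e. subst_ones a e @ [s]"
  let ?\<sigma> = "(-1::real) ^ (length a - ones a)"
  have D: "((\<lambda>x. hlog (b # ?w e) x) has_real_derivative omega b x * hlog (?w e) x) (at x)"
    if "e \<in> ?E" "b = 0 \<or> b = 1" for b e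
    using admissible_subst_ones_snoc[of "[b]" e a s] that a s x by (intro hlog_has_derivative) auto
  show ?thesis
  proof (cases "c = 0")
    case True
    have "length (c # a) - ones (c # a) = Suc (length a - ones a)"
      using True ones_le_length[of a] by (simp add: ones_Cons Suc_diff_le)
    then have "inner_sum (c # a) s = (\<lambda>x. - ?\<sigma> * (\<Sum>e\<in>?E. hlog (0 # ?w e) x))"
      using True by (auto simp: inner_sum_def ones_Cons simp del: hlog.simps)
    moreover have "((\<lambda>x. - ?\<sigma> * (\<Sum>e\<in>?E. hlog (0 # ?w e) x)) has_real_derivative
        - ?\<sigma> * (\<Sum>e\<in>?E. omega 0 x * hlog (?w e) x)) (at x)"
      by (intro DERIV_cmult DERIV_sum D) auto
    ultimately show ?thesis
      using True by (simp add: weight_def inner_sum_def sum_distrib_left algebra_simps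
          del: hlog.simps)
  next
    case False
    then have "c = 1" using c by simp
    then have "inner_sum (c # a) s = (\<lambda>x. ?\<sigma> * (\<Sum>e\<in>?E. hlog (0 # ?w e) x + hlog (1 # ?w e) x))"
      by (auto simp: inner_sum_def ones_Cons sum_eps_set_Suc simp del: hlog.simps)
    moreover have "((\<lambda>x. ?\<sigma> * (\<Sum>e\<in>?E. hlog (0 # ?w e) x + hlog (1 # ?w e) x)) has_real_derivative
        ?\<sigma> * (\<Sum>e\<in>?E. omega 0 x * hlog (?w e) x + omega 1 x * hlog (?w e) x)) (at x)"
      by (intro DERIV_cmult DERIV_sum DERIV_add D) auto
    ultimately show ?thesis
      using \<open>c = 1\<close> by (simp add: weight_def inner_sum_def sum_distrib_left sum.distrib
          algebra_simps del: hlog.simps)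
  qed
qed

lemma inner_sum_tendsto_0:
  assumes "set a \<subseteq> {0, 1}" "1 \<le> s"
  shows "((\<lambda>x. inner_sum a s x) \<longlongrightarrow> 0) (at_right 0)"
proof -
  have "((\<lambda>x. \<Sum>e\<in>eps_set (ones a). hlog (subst_ones a e @ [s]) x) \<longlongrightarrow> (\<Sum>e\<in>eps_set (ones a). 0))
      (at_right 0)"
    using admissible_subst_ones_snoc[of "[]" _ a s] assms
    by (intro tendsto_sum hlog_tendsto_0) auto
  then show ?thesis
    unfolding inner_sum_def by (auto intro: tendsto_mult_right_zero)
qed

lemma inner_sum_lipschitz:
  assumes a: "set a \<subseteq> {0, 1}" and x: "0 \<le> x" "x < 1" and s: "1 \<le> s" "1 \<le> s'"
  shows "\<bar>inner_sum a s x - inner_sum a s' x\<bar>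
    \<le> card (eps_set (ones a)) * (x / (1 - x) ^ (length a + 2)) * \<bar>s - s'\<bar>"
proof -
  let ?E = "eps_set (ones a)"
  let ?d = "\<lambda>e. hlog (subst_ones a e @ [s]) x - hlog (subst_ones a e @ [s']) x"
  have "\<bar>inner_sum a s x - inner_sum a s' x\<bar> = \<bar>\<Sum>e\<in>?E. ?d e\<bar>"
    by (simp add: inner_sum_def abs_mult sum_subtractf flip: right_diff_distrib)
  also have "\<dots> \<le> (\<Sum>e\<in>?E. \<bar>?d e\<bar>)"
    by (rule sum_abs)
  also have "\<dots> \<le> (\<Sum>e\<in>?E. x / (1 - x) ^ (length a + 2) * \<bar>s - s'\<bar>)"
  proof (rule sum_mono)
    fix e assume "e \<in> ?E"
    then have "\<forall>c\<in>set (subst_ones a e). c = 0 \<or> 1 \<le> c"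
      using subst_ones_letters[OF a] by auto
    then show "\<bar>?d e\<bar> \<le> x / (1 - x) ^ (length a + 2) * \<bar>s - s'\<bar>"
      using hlog_snoc_lipschitz[OF _ s x(1) order_refl x(2), of "subst_ones a e"]
      by (simp add: length_subst_ones)
  qed
  finally show ?thesis by (simp add: ac_simps)
qed

lemma inner_sum_inverse_diff_bound:
  assumes "set a \<subseteq> {0, 1}" "0 \<le> x" "x < 1"
  obtains K where "0 \<le> K"
    "\<And>y. 0 < y \<Longrightarrow> y < 1 \<Longrightarrow> \<bar>inner_sum a (inverse y) x - inner_sum a 1 x\<bar> \<le> K * (1 - y) / y"
proof
  let ?K = "card (eps_set (ones a)) * (x / (1 - x) ^ (length a + 2))"
  show "0 \<le> ?K" using assms by simp
  fix y :: real assume y: "0 < y" "y < 1"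
  have "\<bar>inner_sum a (inverse y) x - inner_sum a 1 x\<bar> \<le> ?K * \<bar>inverse y - 1\<bar>"
    using inner_sum_lipschitz[OF assms, of "inverse y" 1] y by (simp add: one_le_inverse)
  also have "\<bar>inverse y - 1\<bar> = (1 - y) / y"
    using y by (simp add: field_simps)
  finally show "\<bar>inner_sum a (inverse y) x - inner_sum a 1 x\<bar> \<le> ?K * (1 - y) / y"
    by simp
qed

lemma inner_sum_inverse_tendsto:
  assumes "set a \<subseteq> {0, 1}" "0 \<le> x" "x < 1"
  shows "((\<lambda>y. inner_sum a (inverse y) x) \<longlongrightarrow> inner_sum a 1 x) (at_left 1)"
proof -
  obtain K where K: "\<And>y. 0 < y \<Longrightarrow> y < 1 \<Longrightarrow>
      \<bar>inner_sum a (inverse y) x - inner_sum a 1 x\<bar> \<le> K * (1 - y) / y"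
    using inner_sum_inverse_diff_bound[OF assms] by blast
  have "((\<lambda>y. inner_sum a (inverse y) x - inner_sum a 1 x) \<longlongrightarrow> 0) (at_left 1)"
  proof (rule Lim_null_comparison)
    show "\<forall>\<^sub>F y in at_left 1. norm (inner_sum a (inverse y) x - inner_sum a 1 x) \<le> K * (1 - y) / y"
      unfolding eventually_at_left_field by (intro exI[of _ 0]) (auto intro: K)
    have "((\<lambda>y. K * (1 - y) / y) \<longlongrightarrow> K * (1 - 1) / 1) (at_left (1::real))"
      by (intro tendsto_intros) auto
    then show "((\<lambda>y. K * (1 - y) / y) \<longlongrightarrow> 0) (at_left 1)"
      by simp
  qed
  then show ?thesis by (simp add: LIM_zero_iff)
qed

section \<open>The differential equation in \<open>x\<close>\<close>

definition deconcat_sum :: "nat set \<Rightarrow> real list \<Rightarrow> real \<Rightarrow> real \<Rightarrow> real \<Rightarrow> real" where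
  "deconcat_sum K i s x y = (\<Sum>k\<in>K. inner_sum (take k i) s x * hlog (drop k i) y)"

definition expansion :: "real list \<Rightarrow> real \<Rightarrow> real \<Rightarrow> real" where
  "expansion i y x = deconcat_sum {0..length i} i (inverse y) x y
     - deconcat_sum {k. k < length i \<and> i ! k = 1} i 1 x y"

lemma deconcat_sum_Suc_has_derivative:
  assumes "finite K" "set i \<subseteq> {0, 1}" "c = 0 \<or> c = 1" "1 \<le> s" "0 < x" "x < 1"
  shows "((\<lambda>x. deconcat_sum (Suc ` K) (c # i) s x y) has_real_derivative
           weight c x * deconcat_sum K i s x y) (at x)"
proof -
  have "(\<lambda>x. deconcat_sum (Suc ` K) (c # i) s x y) =
      (\<lambda>x. \<Sum>k\<in>K. inner_sum (c # take k i) s x * hlog (drop k i) y)"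
    by (simp add: deconcat_sum_def sum.reindex del: hlog.simps)
  moreover have "((\<lambda>x. \<Sum>k\<in>K. inner_sum (c # take k i) s x * hlog (drop k i) y) has_real_derivative
      (\<Sum>k\<in>K. weight c x * inner_sum (take k i) s x * hlog (drop k i) y)) (at x)"
    using assms set_take_subset[of _ i]
    by (intro DERIV_sum DERIV_cmult_right inner_sum_Cons_has_derivative) auto
  ultimately show ?thesis
    by (simp add: deconcat_sum_def sum_distrib_left mult.assoc del: hlog.simps)
qed

lemma expansion_Nil: "expansion [] y x = inner_sum [] (inverse y) x"
  by (simp add: expansion_def deconcat_sum_def)

lemma expansion_Cons:
  "expansion (c # i) y x =
     (inner_sum [] (inverse y) x - (if c = 1 then inner_sum [] 1 x else 0)) * hlog (c # i) y
     + (deconcat_sum (Suc ` {0..length i}) (c # i) (inverse y) x y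
        - deconcat_sum (Suc ` {k. k < length i \<and> i ! k = 1}) (c # i) 1 x y)"
proof -
  have "{0..length (c # i)} = insert 0 (Suc ` {0..length i})"
    by (simp add: atLeast0AtMost atMost_Suc_eq_insert_0)
  moreover have "{k. k < length (c # i) \<and> (c # i) ! k = 1} =
      (if c = 1 then insert 0 else id) (Suc ` {k. k < length i \<and> i ! k = 1})"
  proof (intro set_eqI iffI)
    fix k assume "k \<in> {k. k < length (c # i) \<and> (c # i) ! k = 1}"
    then show "k \<in> (if c = 1 then insert 0 else id) (Suc ` {k. k < length i \<and> i ! k = 1})"
      by (cases k) auto
  qed (auto split: if_splits)
  ultimately show ?thesis
    by (simp add: expansion_def deconcat_sum_def algebra_simps del: hlog.simps)
qed

lemma expansion_Nil_has_derivative: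
  assumes "0 < y" "y < 1" "0 < x" "x < 1"
  shows "((\<lambda>x. expansion [] y x) has_real_derivative y / (1 - x * y)) (at x)"
proof -
  have "1 / (inverse y - x) = y / (1 - x * y)"
    using assms by (simp add: field_simps)
  then show ?thesis
    using inner_sum_Nil_has_derivative[of "inverse y" x] assms
    by (simp add: expansion_Nil one_le_inverse)
qed

lemma expansion_Cons_has_derivative:
  assumes i: "set (c # i) \<subseteq> {0, 1}" and y: "0 < y" "y < 1" and x: "0 < x" "x < 1"
  shows "((\<lambda>x. expansion (c # i) y x) has_real_derivative
    (y / (1 - x * y) - (if c = 1 then 1 / (1 - x) else 0)) * hlog (c # i) y
      + weight c x * expansion i y x) (at x)"
proof -
  have c: "c = 0 \<or> c = 1" and i': "set i \<subseteq> {0, 1}" using i by auto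
  have "1 / (inverse y - x) = y / (1 - x * y)"
    using x y by (simp add: field_simps)
  then have first: "((\<lambda>x. inner_sum [] (inverse y) x - (if c = 1 then inner_sum [] 1 x else 0))
      has_real_derivative y / (1 - x * y) - (if c = 1 then 1 / (1 - x) else 0)) (at x)"
    using inner_sum_Nil_has_derivative[of "inverse y" x] inner_sum_Nil_has_derivative[of 1 x] x y
    by (auto intro!: DERIV_diff simp: one_le_inverse)
  have "((\<lambda>x. (inner_sum [] (inverse y) x - (if c = 1 then inner_sum [] 1 x else 0)) * hlog (c # i) y
      + (deconcat_sum (Suc ` {0..length i}) (c # i) (inverse y) x y
         - deconcat_sum (Suc ` {k. k < length i \<and> i ! k = 1}) (c # i) 1 x y))
    has_real_derivative
      (y / (1 - x * y) - (if c = 1 then 1 / (1 - x) else 0)) * hlog (c # i) y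
      + (weight c x * deconcat_sum {0..length i} i (inverse y) x y
         - weight c x * deconcat_sum {k. k < length i \<and> i ! k = 1} i 1 x y)) (at x)"
    using x y
    by (intro DERIV_add DERIV_diff DERIV_cmult_right first deconcat_sum_Suc_has_derivative i' c)
       (auto simp: one_le_inverse)
  then show ?thesis
    unfolding expansion_Cons by (rule DERIV_cong) (simp add: expansion_def right_diff_distrib)
qed

lemma expansion_tendsto_0:
  assumes "set i \<subseteq> {0, 1}" "0 < y" "y \<le> 1"
  shows "((\<lambda>x. expansion i y x) \<longlongrightarrow> 0) (at_right 0)"
proof -
  have "((\<lambda>x. deconcat_sum K i s x y) \<longlongrightarrow> 0) (at_right 0)" if "1 \<le> s" for K s
    unfolding deconcat_sum_def
    by (intro tendsto_null_sum tendsto_mult_left_zero inner_sum_tendsto_0 that)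
       (use assms(1) set_take_subset[of _ i] in blast)
  then have "((\<lambda>x. expansion i y x) \<longlongrightarrow> 0 - 0) (at_right 0)"
    unfolding expansion_def using assms(2,3) by (intro tendsto_diff) (auto simp: one_le_inverse)
  then show ?thesis
    by simp
qed

text \<open>\<open>L\<^bsub>[x\<^sup>-\<^sup>1|i]\<^esub>(y)\<close> in a form that extends smoothly to \<open>x = 0\<close>.\<close>
definition hlog_inv :: "real list \<Rightarrow> real \<Rightarrow> real \<Rightarrow> real" where
  "hlog_inv i y x = integral {0..y} (\<lambda>t. x / (1 - x * t) * hlog i t)"

lemma hlog_inverse_Cons: "x \<noteq> 0 \<Longrightarrow> hlog (inverse x # i) y = hlog_inv i y x"
  by (simp add: hlog_inv_def omega_inverse)

lemma resolvent_pos: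
  fixes x t y :: real
  assumes "x * y < 1" "0 \<le> t" "t \<le> y"
  shows "0 < 1 - x * t"
proof (cases "x \<le> 0")
  case False
  then have "x * t \<le> x * y" using assms by (intro mult_left_mono) auto
  then show ?thesis using assms by simp
qed (use assms mult_nonpos_nonneg[of x t] in simp)

lemma has_real_derivative_integral_resolvent:
  fixes h :: "real \<Rightarrow> real"
  assumes h: "continuous_on {0..y} h" and xy: "x * y < 1"
  shows "((\<lambda>x. integral {0..y} (\<lambda>t. x / (1 - x * t) * h t)) has_real_derivative
           integral {0..y} (\<lambda>t. h t / (1 - x * t)\<^sup>2)) (at x)"
proof -
  let ?U = "{x. x * y < 1}"
  have U: "open ?U" "convex ?U"
    using open_halfspace_lt[of y 1] convex_halfspace_lt[of y 1] by (simp_all add: mult.commute)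
  have pos: "0 < 1 - x' * t" if "x' \<in> ?U" "t \<in> {0..y}" for x' t
    using resolvent_pos[of x' y t] that by auto
  have "((\<lambda>x. integral (cbox 0 y) (\<lambda>t. x / (1 - x * t) * h t)) has_field_derivative
      integral (cbox 0 y) (\<lambda>t. h t / (1 - x * t)\<^sup>2)) (at x within ?U)"
  proof (rule leibniz_rule_field_derivative)
    fix x' t assume "x' \<in> ?U" "t \<in> cbox 0 y"
    then have "1 - x' * t \<noteq> 0" using pos by force
    then show "((\<lambda>x. x / (1 - x * t) * h t) has_field_derivative h t / (1 - x' * t)\<^sup>2)
        (at x' within ?U)"
      by (auto intro!: derivative_eq_intros simp: field_simps power2_eq_square)
  next
    fix x' assume "x' \<in> ?U"
    then have "continuous_on {0..y} (\<lambda>t. x' / (1 - x' * t) * h t)"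
      using pos by (intro continuous_intros h) force
    then show "(\<lambda>t. x' / (1 - x' * t) * h t) integrable_on cbox 0 y"
      by (simp add: integrable_continuous_real)
  next
    have "continuous_on (?U \<times> {0..y}) (\<lambda>p. h (snd p))"
      by (rule continuous_on_compose2[OF h continuous_on_snd]) auto
    then have "continuous_on (?U \<times> {0..y}) (\<lambda>p. h (snd p) / (1 - fst p * snd p)\<^sup>2)"
      using pos by (intro continuous_intros) force+
    then show "continuous_on (?U \<times> cbox 0 y) (\<lambda>(x, t). h t / (1 - x * t)\<^sup>2)"
      by (simp add: split_beta)
  qed (use xy U in auto)
  then show ?thesis
    using at_within_open[of x ?U] xy U by simp
qed

lemma integral_resolvent_by_parts:
  fixes h h' :: "real \<Rightarrow> real"
  assumes h: "continuous_on {0..y} h" and h': "\<And>t. 0 < t \<Longrightarrow> t < y \<Longrightarrow> (h has_real_derivative h' t) (at t)"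
    and y: "0 \<le> y" and xy: "x * y < 1"
  shows "integral {0..y} (\<lambda>t. h t / (1 - x * t)\<^sup>2)
           = y / (1 - x * y) * h y - integral {0..y} (\<lambda>t. t / (1 - x * t) * h' t)"
proof -
  have pos: "1 - x * t \<noteq> 0" if "t \<in> {0..y}" for t
    using resolvent_pos[OF xy, of t] that by auto
  let ?A = "\<lambda>t. h t / (1 - x * t)\<^sup>2"
  let ?B = "\<lambda>t. t / (1 - x * t) * h' t"
  let ?P = "\<lambda>t. t / (1 - x * t) * h t"
  have "((\<lambda>t. ?A t + ?B t) has_integral ?P y - ?P 0) {0..y}"
  proof (rule fundamental_theorem_of_calculus_interior[OF y])
    show "continuous_on {0..y} ?P"
      using pos by (intro continuous_intros h) auto
    fix t assume t: "t \<in> {0<..<y}"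
    have "((\<lambda>t. t / (1 - x * t)) has_real_derivative 1 / (1 - x * t)\<^sup>2) (at t)"
      using pos[of t] t by (auto intro!: derivative_eq_intros simp: field_simps power2_eq_square)
    from DERIV_mult[OF this h'[of t]] t
    show "(?P has_vector_derivative ?A t + ?B t) (at t)"
      by (simp add: has_real_derivative_iff_has_vector_derivative ac_simps)
  qed
  moreover have "?A integrable_on {0..y}"
    using pos by (intro integrable_continuous_real continuous_intros h) auto
  ultimately have "((\<lambda>t. (?A t + ?B t) - ?A t) has_integral ?P y - ?P 0 - integral {0..y} ?A) {0..y}"
    by (intro has_integral_diff integrable_integral)
  then have "integral {0..y} ?B = ?P y - ?P 0 - integral {0..y} ?A"
    by (simp add: integral_unique)
  then show ?thesis
    by simp
qed

lemma resolvent_partial_fractions: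
  assumes "c = 0 \<or> c = 1" "0 < t" "t < 1" "0 < x" "x < 1"
  shows "t / (1 - x * t) * omega c t
           = (if c = 1 then 1 / (1 - x) else 0) * omega c t - weight c x * (x / (1 - x * t))"
proof -
  have "1 - x * t > 0" using resolvent_pos[of x 1 t] assms by auto
  then have n: "1 - x * t \<noteq> 0" "1 - t \<noteq> 0" "1 - x \<noteq> 0" "x \<noteq> 0" "t \<noteq> 0"
    using assms by auto
  consider "c = 0" | "c = 1" using assms(1) by blast
  then show ?thesis
  proof cases
    case 1
    then show ?thesis using n by (simp add: weight_def omega_def field_simps)
  next
    case 2
    have "t / (1 - x * t) * (1 / (1 - t))
        = 1 / (1 - x) * (1 / (1 - t)) - (1 / x + 1 / (1 - x)) * (x / (1 - x * t))"
      using n by (simp add: divide_simps) (simp add: algebra_simps)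
    then show ?thesis using 2 by (simp add: weight_def omega_def)
  qed
qed

lemma hlog_inv_tendsto_0:
  assumes "admissible i" "0 \<le> y" "y < 1"
  shows "(hlog_inv i y \<longlongrightarrow> 0) (at_right 0)"
proof -
  have "continuous_on {0..y} (hlog i)"
    using continuous_on_hlog[OF assms(1)] by (rule continuous_on_subset) (use assms in auto)
  from has_real_derivative_integral_resolvent[OF this, of 0]
  have "isCont (hlog_inv i y) 0"
    unfolding hlog_inv_def by (auto intro: DERIV_isCont)
  then show ?thesis
    by (simp add: hlog_inv_def isCont_def filterlim_at_split)
qed

lemma hlog_inv_Nil_has_derivative:
  assumes "0 \<le> y" "x * y < 1"
  shows "((\<lambda>x. hlog_inv [] y x) has_real_derivative y / (1 - x * y)) (at x)"
  using has_real_derivative_integral_resolvent[of y "hlog []" x]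
    integral_resolvent_by_parts[of y "hlog []" "\<lambda>_. 0" x] assms
  by (simp add: hlog_inv_def hlog_Nil_eq)

lemma integral_resolvent_mult_omega_hlog:
  assumes ci: "admissible (c # i)" "c = 0 \<or> c = 1" and y: "0 \<le> y" "y < 1" and x: "0 < x" "x < 1"
  shows "integral {0..y} (\<lambda>t. t / (1 - x * t) * (omega c t * hlog i t))
           = (if c = 1 then 1 / (1 - x) else 0) * hlog (c # i) y - weight c x * hlog_inv i y x"
proof -
  let ?r = "if c = 1 then 1 / (1 - x) else 0"
  have xy: "x * y < 1"
    using x y mult_strict_mono[of x 1 y 1] by (cases "y = 0") simp_all
  have "continuous_on {0..y} (hlog i)"
    using continuous_on_hlog[OF admissible_ConsD(1)[OF ci(1)]]
    by (rule continuous_on_subset) (use y in auto)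
  then have "(\<lambda>t. x / (1 - x * t) * hlog i t) integrable_on {0..y}"
    using resolvent_pos[OF xy] by (intro integrable_continuous_real continuous_intros) force+
  from integrable_on_cmult_left[OF this, of "weight c x"]
    integrable_on_cmult_left[OF integrable_omega_mult_hlog[OF ci(1) y], of ?r]
  have int: "(\<lambda>t. ?r * (omega c t * hlog i t)) integrable_on {0..y}"
    "(\<lambda>t. weight c x * (x / (1 - x * t) * hlog i t)) integrable_on {0..y}"
    by simp_all
  have "integral {0..y} (\<lambda>t. t / (1 - x * t) * (omega c t * hlog i t))
      = integral {0..y} (\<lambda>t. ?r * (omega c t * hlog i t) - weight c x * (x / (1 - x * t) * hlog i t))"
  proof (rule integral_spike[of "{0}"])
    fix t assume "t \<in> {0..y} - {0}"
    then have "t / (1 - x * t) * omega c t = ?r * omega c t - weight c x * (x / (1 - x * t))"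
      using resolvent_partial_fractions[OF ci(2) _ _ x, of t] y by simp
    then show "?r * (omega c t * hlog i t) - weight c x * (x / (1 - x * t) * hlog i t)
        = t / (1 - x * t) * (omega c t * hlog i t)"
      by (metis (no_types, lifting) left_diff_distrib mult.assoc)
  qed simp
  also have "\<dots> = ?r * integral {0..y} (\<lambda>t. omega c t * hlog i t)
      - weight c x * integral {0..y} (\<lambda>t. x / (1 - x * t) * hlog i t)"
    using int by (simp only: integral_diff integral_mult_right)
  finally show ?thesis
    by (simp add: hlog_inv_def)
qed

lemma hlog_inv_Cons_has_derivative:
  assumes ci: "admissible (c # i)" "c = 0 \<or> c = 1" and y: "0 < y" "y < 1" and x: "0 < x" "x < 1"
  shows "((\<lambda>x. hlog_inv (c # i) y x) has_real_derivative
    (y / (1 - x * y) - (if c = 1 then 1 / (1 - x) else 0)) * hlog (c # i) y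
      + weight c x * hlog_inv i y x) (at x)"
proof -
  have xy: "x * y < 1"
    using x y mult_strict_mono[of x 1 y 1] by simp
  have cont: "continuous_on {0..y} (hlog (c # i))"
    using continuous_on_hlog[OF ci(1)] by (rule continuous_on_subset) (use y in auto)
  have "integral {0..y} (\<lambda>t. hlog (c # i) t / (1 - x * t)\<^sup>2)
      = y / (1 - x * y) * hlog (c # i) y
        - integral {0..y} (\<lambda>t. t / (1 - x * t) * (omega c t * hlog i t))"
    using integral_resolvent_by_parts[OF cont hlog_has_derivative[OF ci(1)] _ xy] y
    by (simp del: hlog.simps)
  also have "\<dots> = (y / (1 - x * y) - (if c = 1 then 1 / (1 - x) else 0)) * hlog (c # i) y
      + weight c x * hlog_inv i y x"
    using integral_resolvent_mult_omega_hlog[OF ci _ y(2) x] y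
    by (simp add: algebra_simps del: hlog.simps)
  finally show ?thesis
    using has_real_derivative_integral_resolvent[OF cont xy]
    by (simp add: hlog_inv_def del: hlog.simps)
qed

lemma eq_if_same_derivative_and_limit:
  fixes f g :: "real \<Rightarrow> real"
  assumes f: "\<And>x. a < x \<Longrightarrow> x < b \<Longrightarrow> (f has_real_derivative D x) (at x)"
    and g: "\<And>x. a < x \<Longrightarrow> x < b \<Longrightarrow> (g has_real_derivative D x) (at x)"
    and lim: "(f \<longlongrightarrow> l) (at_right a)" "(g \<longlongrightarrow> l) (at_right a)"
    and x: "a < x" "x < b"
  shows "f x = g x"
proof -
  have "\<exists>C. \<forall>z\<in>{a<..<b}. f z - g z = C"
  proof (rule has_field_derivative_zero_constant)
    fix z assume z: "z \<in> {a<..<b}"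
    then have "((\<lambda>z. f z - g z) has_real_derivative 0) (at z)"
      using DERIV_diff[OF f g, of z] by simp
    then show "((\<lambda>z. f z - g z) has_real_derivative 0) (at z within {a<..<b})"
      by (rule has_field_derivative_at_within)
  qed simp
  then obtain C where C: "\<And>z. z \<in> {a<..<b} \<Longrightarrow> f z - g z = C" by blast
  have "eventually (\<lambda>z. f z - g z = C) (at_right a)"
    unfolding eventually_at_right_field using x by (intro exI[of _ b]) (auto intro: C)
  then have "((\<lambda>z. f z - g z) \<longlongrightarrow> C) (at_right a)"
    by (rule tendsto_eventually)
  moreover have "((\<lambda>z. f z - g z) \<longlongrightarrow> l - l) (at_right a)"
    using lim by (rule tendsto_diff)
  ultimately have "C = 0"
    using tendsto_unique[OF trivial_limit_at_right_real] by fastforce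
  then show ?thesis using C x by auto
qed

lemma hlog_inv_eq_expansion:
  assumes "admissible i" "set i \<subseteq> {0, 1}" and y: "0 < y" "y < 1" and x: "0 < x" "x < 1"
  shows "hlog_inv i y x = expansion i y x"
  using assms(1,2) x
proof (induction i arbitrary: x)
  case Nil
  have "z * y < 1" if "0 < z" "z < 1" for z
    using mult_strict_mono[of z 1 y 1] that y by simp
  then show ?case
    using Nil.prems y
    by (intro eq_if_same_derivative_and_limit[where f = "hlog_inv [] y" and g = "expansion [] y"
          and D = "\<lambda>x. y / (1 - x * y)" and a = 0 and b = 1 and l = 0]
        hlog_inv_Nil_has_derivative expansion_Nil_has_derivative hlog_inv_tendsto_0
        expansion_tendsto_0) (auto simp: admissible_def)
next
  case (Cons c i)
  have c: "c = 0 \<or> c = 1" and i: "admissible i" "set i \<subseteq> {0, 1}"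
    using Cons.prems admissible_ConsD(1) by auto
  let ?D = "\<lambda>x. (y / (1 - x * y) - (if c = 1 then 1 / (1 - x) else 0)) * hlog (c # i) y
                + weight c x * expansion i y x"
  show ?case
  proof (rule eq_if_same_derivative_and_limit[where f = "hlog_inv (c # i) y"
        and g = "expansion (c # i) y" and D = ?D and a = 0 and b = 1 and l = 0])
    fix z :: real assume z: "0 < z" "z < 1"
    show "(hlog_inv (c # i) y has_real_derivative ?D z) (at z)"
      using hlog_inv_Cons_has_derivative[OF Cons.prems(1) c y z] Cons.IH[OF i z] by simp
    show "(expansion (c # i) y has_real_derivative ?D z) (at z)"
      using expansion_Cons_has_derivative[OF Cons.prems(2) y z] by simp
  qed (use Cons.prems y hlog_inv_tendsto_0[OF Cons.prems(1)] expansion_tendsto_0[OF Cons.prems(2)]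
      in auto)
qed

section \<open>The limit \<open>y \<rightarrow> 1\<close>\<close>

lemma expansion_split:
  assumes "set i \<subseteq> {0, 1}"
  shows "expansion i y x =
    deconcat_sum {k. k \<le> length i \<and> (k = length i \<or> i ! k = 0)} i (inverse y) x y
    + (\<Sum>k\<in>{k. k < length i \<and> i ! k = 1}.
         (inner_sum (take k i) (inverse y) x - inner_sum (take k i) 1 x) * hlog (drop k i) y)"
proof -
  let ?K0 = "{k. k \<le> length i \<and> (k = length i \<or> i ! k = 0)}"
  let ?K1 = "{k. k < length i \<and> i ! k = 1}"
  have split: "{0..length i} = ?K0 \<union> ?K1"
  proof (intro set_eqI iffI)
    fix k assume k: "k \<in> {0..length i}"
    show "k \<in> ?K0 \<union> ?K1"
    proof (cases "k = length i")
      case False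
      with k have "k < length i" by simp
      moreover have "i ! k \<in> {0, 1}" using assms nth_mem[OF calculation] by blast
      ultimately show ?thesis by auto
    qed simp
  qed auto
  have "deconcat_sum (?K0 \<union> ?K1) i (inverse y) x y
      = deconcat_sum ?K0 i (inverse y) x y + deconcat_sum ?K1 i (inverse y) x y"
    unfolding deconcat_sum_def by (rule sum.union_disjoint) auto
  then show ?thesis
    unfolding expansion_def split
    by (simp add: deconcat_sum_def left_diff_distrib sum_subtractf del: hlog.simps)
qed

lemma inner_sum_diff_mult_hlog_tendsto_0:
  assumes a: "set a \<subseteq> {0, 1}" "0 \<le> x" "x < 1" and b: "admissible b" "b \<noteq> []"
  shows "((\<lambda>y. (inner_sum a (inverse y) x - inner_sum a 1 x) * hlog b y) \<longlongrightarrow> 0) (at_left 1)"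
proof -
  obtain K where K: "0 \<le> K" "\<And>y. 0 < y \<Longrightarrow> y < 1 \<Longrightarrow>
      \<bar>inner_sum a (inverse y) x - inner_sum a 1 x\<bar> \<le> K * (1 - y) / y"
    using inner_sum_inverse_diff_bound[OF a] by blast
  obtain K' where K': "0 \<le> K'" "\<And>u. 0 \<le> u \<Longrightarrow> u < 1 \<Longrightarrow> \<bar>hlog b u\<bar> \<le> K' * u / sqrt (1 - u)"
    using hlog_growth[OF b] by blast
  have "norm ((inner_sum a (inverse y) x - inner_sum a 1 x) * hlog b y) \<le> K * K' * sqrt (1 - y)"
    if y: "0 < y" "y < 1" for y
  proof -
    have "norm ((inner_sum a (inverse y) x - inner_sum a 1 x) * hlog b y)
        \<le> (K * (1 - y) / y) * (K' * y / sqrt (1 - y))"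
      unfolding real_norm_def abs_mult using K K' y by (intro mult_mono) auto
    also have "\<dots> = K * K' * ((1 - y) / sqrt (1 - y))"
      using y by (simp add: field_simps)
    also have "(1 - y) / sqrt (1 - y) = sqrt (1 - y)"
      using y by (simp add: real_div_sqrt)
    finally show ?thesis .
  qed
  then have "\<forall>\<^sub>F y in at_left 1. norm ((inner_sum a (inverse y) x - inner_sum a 1 x) * hlog b y)
      \<le> K * K' * sqrt (1 - y)"
    unfolding eventually_at_left_field by (intro exI[of _ 0]) auto
  moreover have "((\<lambda>y. K * K' * sqrt (1 - y)) \<longlongrightarrow> K * K' * sqrt (1 - 1)) (at_left (1::real))"
    by (intro tendsto_intros)
  then have "((\<lambda>y. K * K' * sqrt (1 - y)) \<longlongrightarrow> 0) (at_left 1)"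
    by simp
  ultimately show ?thesis
    by (rule Lim_null_comparison)
qed

lemma expansion_tendsto_at_left_1:
  assumes i: "admissible i" "set i \<subseteq> {0, 1}" and x: "0 < x" "x < 1"
  shows "((\<lambda>y. expansion i y x) \<longlongrightarrow>
    deconcat_sum {k. k \<le> length i \<and> (k = length i \<or> i ! k = 0)} i 1 x 1) (at_left 1)"
proof -
  let ?K0 = "{k. k \<le> length i \<and> (k = length i \<or> i ! k = 0)}"
  have take: "set (take k i) \<subseteq> {0, 1}" for k
    using i(2) set_take_subset[of k i] by auto
  have "(hlog (drop k i) \<longlongrightarrow> hlog (drop k i) 1) (at_left 1)" if "k \<in> ?K0" for k
  proof (cases "k = length i")
    case False
    with that have "drop k i = 0 # drop (Suc k) i"
      by (simp add: Cons_nth_drop_Suc[symmetric])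
    moreover have "admissible (drop (Suc k) i)" "drop (Suc k) i \<noteq> []"
      using admissible_drop[OF i(1), of k] calculation by (auto dest: admissible_ConsD)
    ultimately show ?thesis
      by (simp only:) (intro hlog_tendsto_at_left_1, auto)
  qed (simp add: hlog_Nil_eq)
  then have "((\<lambda>y. deconcat_sum ?K0 i (inverse y) x y) \<longlongrightarrow> deconcat_sum ?K0 i 1 x 1) (at_left 1)"
    unfolding deconcat_sum_def using x
    by (intro tendsto_sum tendsto_mult inner_sum_inverse_tendsto take) auto
  moreover have "((\<lambda>y. \<Sum>k\<in>{k. k < length i \<and> i ! k = 1}.
      (inner_sum (take k i) (inverse y) x - inner_sum (take k i) 1 x) * hlog (drop k i) y) \<longlongrightarrow> 0)
      (at_left 1)"
    using x admissible_drop[OF i(1)]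
    by (intro tendsto_null_sum inner_sum_diff_mult_hlog_tendsto_0 take) auto
  ultimately have "((\<lambda>y. deconcat_sum ?K0 i (inverse y) x y + (\<Sum>k\<in>{k. k < length i \<and> i ! k = 1}.
      (inner_sum (take k i) (inverse y) x - inner_sum (take k i) 1 x) * hlog (drop k i) y))
      \<longlongrightarrow> deconcat_sum ?K0 i 1 x 1 + 0) (at_left 1)"
    by (rule tendsto_add)
  then show ?thesis
    unfolding expansion_split[OF i(2)] by simp
qed

lemma hlog_inverse_Cons_eq_expansion:
  assumes "admissible i" "set i \<subseteq> {0, 1}" "0 < x" "x < 1" "0 < y" "y < 1"
  shows "hlog (inverse x # i) y = expansion i y x"
  using hlog_inverse_Cons[of x i y] hlog_inv_eq_expansion[OF assms(1,2,5,6,3,4)] assms(3) by simp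

lemma hlog_inverse_Cons_at_1:
  assumes i: "admissible i" "i \<noteq> []" "set i \<subseteq> {0, 1}" and x: "0 < x" "x < 1"
  shows "hlog (inverse x # i) 1 = deconcat_sum {k. k \<le> length i \<and> (k = length i \<or> i ! k = 0)} i 1 x 1"
proof -
  have "eventually (\<lambda>y. hlog (inverse x # i) y = expansion i y x) (at_left 1)"
    unfolding eventually_at_left_field
    by (intro exI[of _ 0] conjI allI impI hlog_inverse_Cons_eq_expansion i x) simp_all
  moreover have "((\<lambda>y. hlog (inverse x # i) y) \<longlongrightarrow> hlog (inverse x # i) 1) (at_left 1)"
    using hlog_tendsto_at_left_1[OF i(1,2), of "inverse x"] x
    by (simp add: one_less_inverse del: hlog.simps)
  ultimately have "((\<lambda>y. expansion i y x) \<longlongrightarrow> hlog (inverse x # i) 1) (at_left 1)"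
    by (rule tendsto_cong[THEN iffD1])
  then show ?thesis
    using expansion_tendsto_at_left_1[OF i(1,3) x] tendsto_unique[OF trivial_limit_at_left_real]
    by blast
qed

theorem mainTheorem1:
  fixes i :: "real list" and x y :: real
  assumes "i \<noteq> []" and "set i \<subseteq> {0, 1}" and "last i = 1"
    and "0 < x" and "x < 1" and "0 < y" and "y < 1"
  shows "hlog (inverse x # i) y =
           (\<Sum>k\<in>{0..length i}. inner_sum (take k i) (inverse y) x * hlog (drop k i) y)
         - (\<Sum>k\<in>{k. k < length i \<and> i ! k = 1}.
              inner_sum (take k i) 1 x * hlog (drop k i) y)
       \<and> hlog (inverse x # i) 1 =
           (\<Sum>k\<in>{k. k \<le> length i \<and> (k = length i \<or> i ! k = 0)}.
              inner_sum (take k i) 1 x * hlog (drop k i) 1)"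
proof -
  have i: "admissible i"
    using assms(1-3) unfolding admissible_def by auto
  show ?thesis
    using hlog_inverse_Cons_eq_expansion[OF i assms(2,4-7)] hlog_inverse_Cons_at_1[OF i assms(1,2,4,5)]
    by (simp add: expansion_def deconcat_sum_def del: hlog.simps)
qed

end
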